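(* Setting: $n$ agents on a connected, undirected weighted graph $\mathcal G$ with symmetric adjacency weights $a_{i,j}$ and Laplacian $L_n$; $L=L_n\otimes I_m$. For each $i$, $\Omega_i\subset\mathbb R^{q_i}$ is closed and convex, $f^i$ is strictly convex on an open set containing $\Omega_i$, $W_i\in\mathbb R^{m\times q_i}$, $d_i\in\mathbb R^m$, $\sum_i d_i=d_0$; $\Omega=\prod_i\Omega_i$, $f(x)=\sum_if^i(x_i)$, $W=[W_1,\dots,W_n]$, $\overline W=\mathrm{diag}\{W_1,\dots,W_n\}$, $d=[d_1^{\rm T},\dots,d_n^{\rm T}]^{\rm T}$; Slater's condition holds (some $x$ in the interior of $\Omega$ has $Wx=d_0$). Let $\mathcal F$ be the set-valued map $$\mathcal F(y,\lambda,z)=\Big\{\big(-y+x-g+\overline W^{\rm T}\lambda,\ d-\overline Wx-L\lambda-Lz,\ L\lambda\big):\ g\in\partial f(x),\ x=P_\Omega(y)\Big\}.$$ Let $x^*$ be the solution of $\min f(x)$ s.t. $Wx=d_0$, $x\in\Omega$, and let $(y^*,\lambda^*,z^* )$ be an equilibrium of $\dot\xi\in\mathcal F(\xi)$ (i.e. $0\in\mathcal F(y^*,\lambda^*,z^* )$) with $x^*=P_\Omega(y^* )$. Define $$V(y,\lambda,z)=\tfrac12\big(\|y-P_\Omega(y^* )\|^2-\|y-P_\Omega(y)\|^2\big)+\tfrac12\|\lambda-\lambda^*\|^2+\tfrac12\|z-z^*\|^2.$$ If $a\in\mathcal L_{\mathcal F}V(y,\lambda,z)$, then there exist $g(x)\in\partial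 f(x)$ and $g(x^* )\in\partial f(x^* )$, with $x=P_\Omega(y)$, such that $$a\le -(x-x^* )^{\rm T}(g(x)-g(x^* ))-\lambda^{\rm T}L\lambda\le 0.$$
   Context: $\partial f$ is the convex subdifferential; $P_\Omega$ the Euclidean projection onto $\Omega$. For a locally Lipschitz $V$ with Clarke generalized gradient $\partial V$, the set-valued Lie derivative is $\mathcal L_{\mathcal F}V(\xi)=\{a\in\mathbb R:\ \exists v\in\mathcal F(\xi)\text{ with } p^{\rm T}v=a\ \forall p\in\partial V(\xi)\}$. *)

theory Defs
  imports "HOL-Analysis.Analysis" "HOL-Library.Liminf_Limsup"
begin

text \<open>Strict convexity on a set (following the library convention for convex_on,
  the set is required to be convex).\<close>
definition strict_convex_on :: "'a::real_vector set \<Rightarrow> ('a \<Rightarrow> real) \<Rightarrow> bool" where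
  "strict_convex_on S f \<longleftrightarrow> convex S \<and>
     (\<forall>x\<in>S. \<forall>y\<in>S. x \<noteq> y \<longrightarrow> (\<forall>t. 0 < t \<and> t < 1 \<longrightarrow>
        f ((1 - t) *\<^sub>R x + t *\<^sub>R y) < (1 - t) * f x + t * f y))"

definition subdiff :: "('a::real_inner \<Rightarrow> real) \<Rightarrow> 'a set \<Rightarrow> 'a \<Rightarrow> 'a set" where
  "subdiff f D x = {g. \<forall>y\<in>D. f y \<ge> f x + inner g (y - x)}"

definition clarke_dir :: "('a::real_normed_vector \<Rightarrow> real) \<Rightarrow> 'a \<Rightarrow> 'a \<Rightarrow> ereal" where
  "clarke_dir V \<xi> v = Limsup (at \<xi> \<times>\<^sub>F at_right (0::real))
      (\<lambda>(\<eta>, t). ereal ((V (\<eta> + t *\<^sub>R v) - V \<eta>) / t))"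

definition clarke_grad :: "('a::real_inner \<Rightarrow> real) \<Rightarrow> 'a \<Rightarrow> 'a set" where
  "clarke_grad V \<xi> = {p. \<forall>v. ereal (inner p v) \<le> clarke_dir V \<xi> v}"

definition set_lie_deriv :: "('a::real_inner \<Rightarrow> 'a set) \<Rightarrow> ('a \<Rightarrow> real) \<Rightarrow> 'a \<Rightarrow> real set" where
  "set_lie_deriv F V \<xi> = {a. \<exists>v\<in>F \<xi>. \<forall>p\<in>clarke_grad V \<xi>. inner p v = a}"

text \<open>Block structure: the coordinates of the decision vector x (type 'k) are
  partitioned into agent blocks via blk; x_i corresponds to blockp blk i x,
  which lives in the coordinate subspace block_space blk i (isometric to R^{q_i}).\<close>
definition blockp :: "('k::finite \<Rightarrow> 'n) \<Rightarrow> 'n \<Rightarrow> real^'k \<Rightarrow> real^'k" where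
  "blockp blk i x = (\<chi> k. if blk k = i then x $ k else 0)"

definition block_space :: "('k::finite \<Rightarrow> 'n) \<Rightarrow> 'n \<Rightarrow> (real^'k) set" where
  "block_space blk i = {v. \<forall>k. blk k \<noteq> i \<longrightarrow> v $ k = 0}"

definition prod_set :: "('k::finite \<Rightarrow> 'n::finite) \<Rightarrow> ('n \<Rightarrow> (real^'k) set) \<Rightarrow> (real^'k) set" where
  "prod_set blk Om = {x. \<forall>i. blockp blk i x \<in> Om i}"

definition sep_fun :: "('k::finite \<Rightarrow> 'n::finite) \<Rightarrow> ('n \<Rightarrow> real^'k \<Rightarrow> real) \<Rightarrow> real^'k \<Rightarrow> real" where
  "sep_fun blk fi x = (\<Sum>i\<in>UNIV. fi i (blockp blk i x))"

text \<open>W = [W_1,...,W_n] is a single m x (sum q_i) matrix; Wbar = diag(W_1,...,W_n).\<close>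
definition Wbar :: "real^'k^'m \<Rightarrow> ('k::finite \<Rightarrow> 'n::finite) \<Rightarrow> real^'k \<Rightarrow> real^'m^'n" where
  "Wbar W blk x = (\<chi> i. W *v blockp blk i x)"

definition WbarT :: "real^'k^'m \<Rightarrow> ('k::finite \<Rightarrow> 'n::finite) \<Rightarrow> real^'m^'n \<Rightarrow> real^'k" where
  "WbarT W blk lam = (\<chi> k. (transpose W *v (lam $ blk k)) $ k)"

text \<open>Graph Laplacian L_n = D - A of symmetric weights a, and L = L_n (x) I_m.\<close>
definition laplacian :: "('n::finite \<Rightarrow> 'n \<Rightarrow> real) \<Rightarrow> real^'n^'n" where
  "laplacian a = (\<chi> i j. if i = j then (\<Sum>k\<in>UNIV - {i}. a i k) else - a i j)"

definition Lkron :: "('n::finite \<Rightarrow> 'n \<Rightarrow> real) \<Rightarrow> real^'m^'n \<Rightarrow> real^'m^'n" where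
  "Lkron a lam = (\<chi> i. \<Sum>j\<in>UNIV. (laplacian a $ i $ j) *\<^sub>R (lam $ j))"

definition connected_graph :: "('n \<Rightarrow> 'n \<Rightarrow> real) \<Rightarrow> bool" where
  "connected_graph a \<longleftrightarrow> (\<forall>i j. (i, j) \<in> {(u, v). a u v > 0}\<^sup>*)"

definition Fmap :: "('n::finite \<Rightarrow> 'n \<Rightarrow> real) \<Rightarrow> ('k::finite \<Rightarrow> 'n) \<Rightarrow> real^'k^'m
     \<Rightarrow> real^'m^'n \<Rightarrow> (real^'k) set \<Rightarrow> (real^'k \<Rightarrow> real) \<Rightarrow> (real^'k) set
     \<Rightarrow> (real^'k) \<times> (real^'m^'n) \<times> (real^'m^'n) \<Rightarrow> ((real^'k) \<times> (real^'m^'n) \<times> (real^'m^'n)) set" where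
  "Fmap a blk W d Om f D \<xi> =
     (case \<xi> of (y, lam, z) \<Rightarrow>
       (let x = closest_point Om y in
         {(- y + x - g + WbarT W blk lam, d - Wbar W blk x - Lkron a lam - Lkron a z, Lkron a lam)
          | g. g \<in> subdiff f D x}))"

definition Vfun :: "(real^'k::finite) set \<Rightarrow> real^'k \<Rightarrow> real^'m::finite^'n::finite \<Rightarrow> real^'m^'n
     \<Rightarrow> (real^'k) \<times> (real^'m^'n) \<times> (real^'m^'n) \<Rightarrow> real" where
  "Vfun Om ys lams zs \<xi> =
     (case \<xi> of (y, lam, z) \<Rightarrow>
        (1/2) * ((norm (y - closest_point Om ys))\<^sup>2 - (norm (y - closest_point Om y))\<^sup>2)
        + (1/2) * (norm (lam - lams))\<^sup>2 + (1/2) * (norm (z - zs))\<^sup>2)"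

end

theory Submission
  imports Defs
begin

text \<open>The Clarke gradient of V at (y, \<lambda>, z) contains (P y - x*, \<lambda> - \<lambda>*, z - z*): for the
  y-part (|y - x*|^2 - dist(y, \<Omega>)^2)/2, using P y as a competitor for the projection of
  y + t v makes the quadratic terms in t cancel, so its difference quotients are bounded below
  by (P y - x*)\<bullet>v, and P is continuous. Pairing this gradient with an element of F and
  subtracting the equilibrium equations leaves three terms:
  (P y - x*)\<bullet>((P y - y) - (x* - y*)), nonpositive because projections are firmly
  nonexpansive; -(P y - x*)\<bullet>(g - g*), nonpositive by monotonicity of the subdifferential;
  and -\<lambda>\<bullet>L\<lambda>, nonpositive because the graph Laplacian is positive semidefinite.\<close>

lemma laplacian_commute:
  assumes "\<And>i j. a i j = a j i"
  shows "laplacian a $ i $ j = laplacian a $ j $ i"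
  by (simp add: laplacian_def assms)

lemma sum_laplacian_row:
  "(\<Sum>j\<in>UNIV. laplacian a $ i $ j * u j) = (\<Sum>j\<in>UNIV. a i j * (u i - u j))"
proof -
  have "(\<Sum>j\<in>UNIV. laplacian a $ i $ j * u j)
      = (\<Sum>j\<in>UNIV - {i}. a i j) * u i - (\<Sum>j\<in>UNIV - {i}. a i j * u j)"
    by (simp add: sum.remove[of UNIV i] laplacian_def sum_negf)
  also have "\<dots> = (\<Sum>j\<in>UNIV - {i}. a i j * (u i - u j))"
    by (simp add: sum_distrib_right right_diff_distrib sum_subtractf)
  also have "\<dots> = (\<Sum>j\<in>UNIV. a i j * (u i - u j))"
    by (simp add: sum.remove[of UNIV i])
  finally show ?thesis .
qed

lemma inner_Lkron:
  "inner \<mu> (Lkron a \<nu>) = (\<Sum>i\<in>UNIV. \<Sum>j\<in>UNIV. laplacian a $ i $ j * inner (\<mu> $ i) (\<nu> $ j))"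
  by (subst inner_vec_def) (simp add: Lkron_def inner_sum_right)

lemma inner_Lkron_commute:
  assumes "\<And>i j. a i j = a j i"
  shows "inner \<mu> (Lkron a \<nu>) = inner \<nu> (Lkron a \<mu>)"
  unfolding inner_Lkron by (subst sum.swap) (simp add: laplacian_commute[OF assms] inner_commute)

lemma inner_Lkron_self:
  assumes sym: "\<And>i j. a i j = a j i"
  shows "inner l (Lkron a l) = (\<Sum>i\<in>UNIV. \<Sum>j\<in>UNIV. a i j * (norm (l $ i - l $ j))\<^sup>2) / 2"
proof -
  define c where "c i j = inner (l $ i) (l $ j)" for i j
  have row: "inner l (Lkron a l) = (\<Sum>i\<in>UNIV. \<Sum>j\<in>UNIV. a i j * (c i i - c i j))"
    unfolding inner_Lkron c_def by (simp add: sum_laplacian_row)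
  moreover have "\<dots> = (\<Sum>i\<in>UNIV. \<Sum>j\<in>UNIV. a i j * (c j j - c j i))"
    by (subst sum.swap) (simp add: sym)
  ultimately have "2 * inner l (Lkron a l) = (\<Sum>i\<in>UNIV. \<Sum>j\<in>UNIV. a i j * (c i i - c i j))
      + (\<Sum>i\<in>UNIV. \<Sum>j\<in>UNIV. a i j * (c j j - c j i))"
    by linarith
  also have "\<dots> = (\<Sum>i\<in>UNIV. \<Sum>j\<in>UNIV. a i j * (c i i + c j j - c i j - c j i))"
    by (simp add: sum.distrib[symmetric] algebra_simps)
  finally have "2 * inner l (Lkron a l) = \<dots>" .
  moreover have "(norm (l $ i - l $ j))\<^sup>2 = c i i + c j j - c i j - c j i" for i j
    by (simp add: c_def power2_norm_eq_inner inner_diff_left inner_diff_right)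
  ultimately show ?thesis by simp
qed

lemma inner_Lkron_self_nonneg:
  assumes "\<And>i j. a i j = a j i" and "\<And>i j. a i j \<ge> 0"
  shows "inner l (Lkron a l) \<ge> 0"
  unfolding inner_Lkron_self[OF assms(1)]
  by (intro divide_nonneg_pos sum_nonneg mult_nonneg_nonneg assms(2)) auto

lemma inner_WbarT: "inner x (WbarT W blk \<mu>) = inner (Wbar W blk x) \<mu>"
proof -
  have Wbar: "Wbar W blk x $ i $ m = (\<Sum>k\<in>UNIV. if blk k = i then W$m$k * x$k else 0)" for i m
    by (simp add: Wbar_def blockp_def matrix_vector_mult_def if_distrib cong: if_cong)
  have "inner (Wbar W blk x) \<mu>
      = (\<Sum>i\<in>UNIV. \<Sum>m\<in>UNIV. \<Sum>k\<in>UNIV. if blk k = i then W$m$k * x$k * \<mu>$i$m else 0)"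
    by (auto simp: inner_vec_def Wbar sum_distrib_right intro!: sum.cong)
  also have "\<dots> = (\<Sum>k\<in>UNIV. \<Sum>m\<in>UNIV. \<Sum>i\<in>UNIV. if blk k = i then W$m$k * x$k * \<mu>$i$m else 0)"
    by (subst sum.swap, subst (2) sum.swap, subst sum.swap) (rule refl)
  also have "\<dots> = inner x (WbarT W blk \<mu>)"
    by (simp add: WbarT_def inner_vec_def matrix_vector_mult_def transpose_def sum_distrib_left
        mult_ac)
  finally show ?thesis by simp
qed

lemma inner_closest_point_residual_nonpos:
  fixes S :: "'a::euclidean_space set"
  assumes "convex S" "closed S" "S \<noteq> {}"
  shows "inner (closest_point S x - closest_point S y)
           ((closest_point S x - x) - (closest_point S y - y)) \<le> 0"
proof -
  have "inner (x - closest_point S x) (closest_point S y - closest_point S x) \<le> 0"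
       "inner (y - closest_point S y) (closest_point S x - closest_point S y) \<le> 0"
    using assms by (simp_all add: closest_point_dot closest_point_in_set)
  then show ?thesis
    by (simp add: inner_diff_left inner_diff_right inner_commute)
qed

lemma subdiff_monotone:
  assumes "g \<in> subdiff f D x" "h \<in> subdiff f D y" "x \<in> D" "y \<in> D"
  shows "inner (x - y) (g - h) \<ge> 0"
proof -
  have "f y \<ge> f x + inner g (y - x)" "f x \<ge> f y + inner h (x - y)"
    using assms by (auto simp: subdiff_def)
  then show ?thesis
    by (simp add: inner_diff_left inner_diff_right inner_commute)
qed

lemma clarke_gradI:
  fixes V :: "'a::euclidean_space \<Rightarrow> real" and P :: "'a \<Rightarrow> 'a"
  assumes cont: "continuous (at \<xi>) P"
    and slope: "\<And>\<eta> v t. t > 0 \<Longrightarrow> t * inner (P \<eta>) v \<le> V (\<eta> + t *\<^sub>R v) - V \<eta>"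
  shows "P \<xi> \<in> clarke_grad V \<xi>"
  unfolding clarke_grad_def
proof (intro CollectI allI)
  fix v :: 'a
  define F where "F = at \<xi> \<times>\<^sub>F at_right (0::real)"
  have "F \<noteq> bot" by (simp add: F_def prod_filter_eq_bot)
  moreover have "(fst \<longlongrightarrow> \<xi>) F"
    using filterlim_fst[of "at \<xi>" "at_right (0::real)"] by (simp add: F_def filterlim_at)
  then have "((\<lambda>q. inner (P (fst q)) v) \<longlongrightarrow> inner (P \<xi>) v) F"
    using cont by (intro tendsto_intros) (simp add: isCont_tendsto_compose continuous_at)
  ultimately have "ereal (inner (P \<xi>) v) = Limsup F (\<lambda>q. ereal (inner (P (fst q)) v))"
    by (intro lim_imp_Limsup[symmetric]) auto
  also have "\<dots> \<le> Limsup F (\<lambda>(\<eta>, t). ereal ((V (\<eta> + t *\<^sub>R v) - V \<eta>) / t))"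
  proof (rule Limsup_mono)
    have "eventually (\<lambda>q. snd q > 0) F"
      unfolding F_def eventually_prod_filter
      by (intro exI[of _ "\<lambda>_. True"] exI[of _ "\<lambda>t. t > 0"]) (auto simp: eventually_at_right_less)
    then show "\<forall>\<^sub>F q in F. ereal (inner (P (fst q)) v)
                 \<le> (\<lambda>(\<eta>, t). ereal ((V (\<eta> + t *\<^sub>R v) - V \<eta>) / t)) q"
      by eventually_elim (auto simp: pos_le_divide_eq mult.commute slope)
  qed
  finally show "ereal (inner (P \<xi>) v) \<le> clarke_dir V \<xi> v"
    by (simp add: clarke_dir_def F_def)
qed

lemma norm_add_scaleR_power2:
  "(norm (x + t *\<^sub>R b))\<^sup>2 = (norm x)\<^sup>2 + 2 * t * inner x b + t\<^sup>2 * (norm b)\<^sup>2"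
  unfolding power2_norm_eq_inner
  by (simp add: inner_add_left inner_add_right inner_commute power2_eq_square algebra_simps)

lemma half_norm_power2_increment:
  "t * inner (x - c) v \<le> ((norm (x + t *\<^sub>R v - c))\<^sup>2 - (norm (x - c))\<^sup>2) / 2"
  using norm_add_scaleR_power2[of "x - c" t v] by (simp add: algebra_simps)

lemma closest_point_potential_increment:
  assumes "closed S" "S \<noteq> {}"
  shows "t * inner (closest_point S y - c) v
    \<le> ((norm (y + t *\<^sub>R v - c))\<^sup>2 - (norm (y + t *\<^sub>R v - closest_point S (y + t *\<^sub>R v)))\<^sup>2) / 2
     - ((norm (y - c))\<^sup>2 - (norm (y - closest_point S y))\<^sup>2) / 2"
    (is "_ \<le> ?rhs")
proof -
  define p where "p = closest_point S y"
  have "dist (y + t *\<^sub>R v) (closest_point S (y + t *\<^sub>R v)) \<le> dist (y + t *\<^sub>R v) p"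
    using assms by (simp add: p_def closest_point_le closest_point_in_set)
  then have proj: "(norm (y + t *\<^sub>R v - closest_point S (y + t *\<^sub>R v)))\<^sup>2 \<le> (norm (y + t *\<^sub>R v - p))\<^sup>2"
    by (simp add: dist_norm power_mono)
  have expand: "(norm (y + t *\<^sub>R v - u))\<^sup>2
      = (norm (y - u))\<^sup>2 + 2 * t * inner (y - u) v + t\<^sup>2 * (norm v)\<^sup>2" for u
    using norm_add_scaleR_power2[of "y - u" t v] by (simp add: algebra_simps)
  have "t * inner (closest_point S y - c) v
      = ((norm (y + t *\<^sub>R v - c))\<^sup>2 - (norm (y + t *\<^sub>R v - p))\<^sup>2) / 2
        - ((norm (y - c))\<^sup>2 - (norm (y - closest_point S y))\<^sup>2) / 2"
    unfolding p_def[symmetric] expand by (simp add: inner_diff_left field_simps)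
  also have "\<dots> \<le> ?rhs"
    by (intro diff_right_mono divide_right_mono diff_left_mono proj) simp
  finally show ?thesis .
qed

lemma Vfun_clarke_grad:
  fixes S :: "(real^'k::finite) set" and lams zs :: "real^'m::finite^'n::finite"
  assumes "convex S" "closed S" "S \<noteq> {}"
  shows "(closest_point S y - closest_point S ys, lam - lams, z - zs)
           \<in> clarke_grad (Vfun S ys lams zs) (y, lam, z)"
proof -
  define P where "P \<eta> = (closest_point S (fst \<eta>) - closest_point S ys,
                          fst (snd \<eta>) - lams, snd (snd \<eta>) - zs)"
    for \<eta> :: "(real^'k) \<times> (real^'m^'n) \<times> (real^'m^'n)"
  have "isCont (\<lambda>\<eta>. closest_point S (fst \<eta>)) \<eta>"
    for \<eta> :: "(real^'k) \<times> (real^'m^'n) \<times> (real^'m^'n)"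
    using continuous_at_closest_point[OF assms]
    by (intro continuous_at_compose[of \<eta> fst "closest_point S", unfolded o_def] continuous_intros)
  then have "isCont P \<eta>" for \<eta>
    unfolding P_def by (intro continuous_intros)
  moreover have "t * inner (P \<eta>) v \<le> Vfun S ys lams zs (\<eta> + t *\<^sub>R v) - Vfun S ys lams zs \<eta>"
    for \<eta> v and t :: real
  proof -
    obtain y1 l1 z1 where "\<eta> = (y1, l1, z1)" by (cases \<eta>) auto
    moreover obtain vy vl vz where "v = (vy, vl, vz)" by (cases v) auto
    ultimately have "t * inner (P \<eta>) v = t * inner (closest_point S y1 - closest_point S ys) vy
        + t * inner (l1 - lams) vl + t * inner (z1 - zs) vz"
      by (simp add: P_def algebra_simps)
    moreover from \<open>\<eta> = _\<close> \<open>v = _\<close> have "Vfun S ys lams zs (\<eta> + t *\<^sub>R v) - Vfun S ys lams zs \<eta>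
        = (((norm (y1 + t *\<^sub>R vy - closest_point S ys))\<^sup>2
             - (norm (y1 + t *\<^sub>R vy - closest_point S (y1 + t *\<^sub>R vy)))\<^sup>2) / 2
           - ((norm (y1 - closest_point S ys))\<^sup>2 - (norm (y1 - closest_point S y1))\<^sup>2) / 2)
        + ((norm (l1 + t *\<^sub>R vl - lams))\<^sup>2 - (norm (l1 - lams))\<^sup>2) / 2
        + ((norm (z1 + t *\<^sub>R vz - zs))\<^sup>2 - (norm (z1 - zs))\<^sup>2) / 2"
      by (simp add: Vfun_def field_simps)
    ultimately show ?thesis
      using closest_point_potential_increment[OF assms(2,3), of t y1 "closest_point S ys" vy]
        half_norm_power2_increment[of t l1 lams vl] half_norm_power2_increment[of t z1 zs vz]
      by linarith
  qed
  ultimately show ?thesis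
    using clarke_gradI[of "(y, lam, z)" P] by (simp add: P_def)
qed

lemma blockp_linear: "linear (blockp blk i)"
  by (auto simp: linear_iff blockp_def vec_eq_iff algebra_simps)

lemma prod_set_eq_INT: "prod_set blk Om = (\<Inter>i. blockp blk i -` Om i)"
  by (auto simp: prod_set_def)

lemma closed_prod_set:
  assumes "\<And>i. closed (Om i)"
  shows "closed (prod_set blk Om)"
  unfolding prod_set_eq_INT
  by (intro closed_INT ballI continuous_closed_vimage linear_continuous_at assms)
     (simp add: blockp_linear linear_conv_bounded_linear[symmetric])

lemma convex_prod_set:
  assumes "\<And>i. convex (Om i)"
  shows "convex (prod_set blk Om)"
  unfolding prod_set_eq_INT by (intro convex_INT ballI convex_linear_vimage blockp_linear assms)

lemma Fmap_equilibrium: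
  assumes "0 \<in> Fmap a blk W d S f D (ys, lams, zs)"
  obtains gs where "gs \<in> subdiff f D (closest_point S ys)"
    and "gs = closest_point S ys - ys + WbarT W blk lams"
    and "d = Wbar W blk (closest_point S ys) + Lkron a lams + Lkron a zs"
    and "Lkron a lams = 0"
proof -
  from assms obtain gs where "gs \<in> subdiff f D (closest_point S ys)"
    and "0 = (- ys + closest_point S ys - gs + WbarT W blk lams,
              d - Wbar W blk (closest_point S ys) - Lkron a lams - Lkron a zs, Lkron a lams)"
    by (auto simp: Fmap_def Let_def)
  then show thesis
    by (intro that[of gs]) (auto simp: zero_prod_def algebra_simps)
qed

lemma set_lie_deriv_Vfun:
  assumes "convex S" "closed S" "S \<noteq> {}"
    and "r \<in> set_lie_deriv (Fmap a blk W d S f D) (Vfun S ys lams zs) (y, lam, z)"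
  obtains g where "g \<in> subdiff f D (closest_point S y)"
    and "r = inner (closest_point S y - closest_point S ys, lam - lams, z - zs)
                (- y + closest_point S y - g + WbarT W blk lam,
                 d - Wbar W blk (closest_point S y) - Lkron a lam - Lkron a z, Lkron a lam)"
proof -
  from assms(4) obtain v where v: "v \<in> Fmap a blk W d S f D (y, lam, z)"
    and r: "\<forall>p\<in>clarke_grad (Vfun S ys lams zs) (y, lam, z). inner p v = r"
    by (auto simp: set_lie_deriv_def)
  from v obtain g where "g \<in> subdiff f D (closest_point S y)"
    and "v = (- y + closest_point S y - g + WbarT W blk lam,
              d - Wbar W blk (closest_point S y) - Lkron a lam - Lkron a z, Lkron a lam)"
    by (auto simp: Fmap_def Let_def)
  with r Vfun_clarke_grad[OF assms(1-3), of y ys lam lams z zs] show thesis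
    by (intro that[of g]) auto
qed

lemma saddle_flow_dissipation_eq:
  assumes sym: "\<And>i j. a i j = a j i"
    and gs: "gs = xs - ys + WbarT W blk lams"
    and d: "d = Wbar W blk xs + Lkron a lams + Lkron a zs"
    and equil: "Lkron a lams = 0"
  shows "inner (x - xs, lam - lams, z - zs)
           (- y + x - g + WbarT W blk lam, d - Wbar W blk x - Lkron a lam - Lkron a z, Lkron a lam)
       = inner (x - xs) ((x - y) - (xs - ys)) - inner (x - xs) (g - gs) - inner lam (Lkron a lam)"
proof -
  have "inner u (Lkron a lams) = 0" "inner lams (Lkron a u) = 0" for u
    using equil inner_Lkron_commute[OF sym, where \<mu> = lams and \<nu> = u] by simp_all
  moreover have "inner z (Lkron a lam) = inner lam (Lkron a z)"
    "inner zs (Lkron a lam) = inner lam (Lkron a zs)"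
    by (simp_all add: inner_Lkron_commute[OF sym])
  ultimately show ?thesis
    by (simp add: gs d inner_add_left inner_add_right inner_diff_left inner_diff_right
        inner_WbarT[of x] inner_WbarT[of xs] inner_commute[of _ "Wbar W blk _"])
qed

theorem lemma6:
  fixes a :: "'n::finite \<Rightarrow> 'n \<Rightarrow> real"
    and blk :: "'k::finite \<Rightarrow> 'n"
    and W :: "real^'k^'m::finite"
    and d :: "real^'m^'n"
    and Om :: "'n \<Rightarrow> (real^'k) set"
    and U :: "'n \<Rightarrow> (real^'k) set"
    and fi :: "'n \<Rightarrow> real^'k \<Rightarrow> real"
    and xs ys :: "real^'k"
    and lams zs :: "real^'m^'n"
    and y :: "real^'k" and lam z :: "real^'m^'n"
    and r :: real
  assumes sym: "\<And>i j. a i j = a j i"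
    and nonneg: "\<And>i j. a i j \<ge> 0"
    and conn: "connected_graph a"
    and blocks_nonempty: "\<And>i. \<exists>k. blk k = i"
    and Om_sub: "\<And>i. Om i \<subseteq> block_space blk i"
    and Om_closed: "\<And>i. closed (Om i)"
    and Om_convex: "\<And>i. convex (Om i)"
    and U_open: "\<And>i. openin (top_of_set (block_space blk i)) (U i)"
    and Om_U: "\<And>i. Om i \<subseteq> U i"
    and f_strict: "\<And>i. strict_convex_on (U i) (fi i)"
    and slater: "\<exists>x\<in>interior (prod_set blk Om). W *v x = (\<Sum>i\<in>UNIV. d $ i)"
    and xs_feas: "xs \<in> prod_set blk Om" "W *v xs = (\<Sum>i\<in>UNIV. d $ i)"
    and xs_opt: "\<And>x. x \<in> prod_set blk Om \<Longrightarrow> W *v x = (\<Sum>i\<in>UNIV. d $ i) \<Longrightarrow>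
                   sep_fun blk fi xs \<le> sep_fun blk fi x"
    and equil: "0 \<in> Fmap a blk W d (prod_set blk Om) (sep_fun blk fi) (prod_set blk U) (ys, lams, zs)"
    and xs_proj: "xs = closest_point (prod_set blk Om) ys"
    and r_in: "r \<in> set_lie_deriv (Fmap a blk W d (prod_set blk Om) (sep_fun blk fi) (prod_set blk U))
                 (Vfun (prod_set blk Om) ys lams zs) (y, lam, z)"
  shows "\<exists>gx \<in> subdiff (sep_fun blk fi) (prod_set blk U) (closest_point (prod_set blk Om) y).
         \<exists>gs \<in> subdiff (sep_fun blk fi) (prod_set blk U) xs.
           r \<le> - inner (closest_point (prod_set blk Om) y - xs) (gx - gs) - inner lam (Lkron a lam)
         \<and> - inner (closest_point (prod_set blk Om) y - xs) (gx - gs) - inner lam (Lkron a lam) \<le> 0"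
proof -
  let ?S = "prod_set blk Om" and ?D = "prod_set blk U" and ?f = "sep_fun blk fi"
  let ?x = "closest_point ?S y"
  have S: "convex ?S" "closed ?S" "?S \<noteq> {}"
    using convex_prod_set[OF Om_convex] closed_prod_set[OF Om_closed] xs_feas(1) by auto
  have SD: "?S \<subseteq> ?D"
    using Om_U by (auto simp: prod_set_def)
  obtain gs where gs: "gs \<in> subdiff ?f ?D xs" "gs = xs - ys + WbarT W blk lams"
    and d: "d = Wbar W blk xs + Lkron a lams + Lkron a zs" and equil': "Lkron a lams = 0"
    using Fmap_equilibrium[OF equil] unfolding xs_proj[symmetric] .
  obtain g where g: "g \<in> subdiff ?f ?D ?x"
    and r: "r = inner (?x - xs, lam - lams, z - zs)
                (- y + ?x - g + WbarT W blk lam, d - Wbar W blk ?x - Lkron a lam - Lkron a z, Lkron a lam)"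
    using set_lie_deriv_Vfun[OF S r_in] unfolding xs_proj[symmetric] .
  have "r = inner (?x - xs) ((?x - y) - (xs - ys)) - inner (?x - xs) (g - gs) - inner lam (Lkron a lam)"
    unfolding r by (rule saddle_flow_dissipation_eq[OF sym gs(2) d equil'])
  moreover have "inner (?x - xs) ((?x - y) - (xs - ys)) \<le> 0"
    using inner_closest_point_residual_nonpos[OF S, of y ys] by (simp add: xs_proj)
  moreover have "inner (?x - xs) (g - gs) \<ge> 0"
    using subdiff_monotone[OF g gs(1)] SD xs_feas(1) closest_point_in_set[OF S(2,3)] by blast
  moreover have "inner lam (Lkron a lam) \<ge> 0"
    using inner_Lkron_self_nonneg[OF sym nonneg] .
  ultimately show ?thesis
    using g gs(1) by (intro bexI[of _ g] bexI[of _ gs]) linarith+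
qed

end
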